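(* In the bandit setting, let $\beta=\frac1K$ and run Gaptron with gap map $a(\mathbf W_t,\mathbf x_t)=1-\max\{\mathbb 1[m_t^\star>\beta],\,m_t^\star\}$, exploration rate $\gamma=\min\Big\{1,\sqrt{\frac{K^3X^2D^2}{2(1-\beta)(K-1)T}}\Big\}$, learning rate $\eta=\frac{\gamma(1-\beta)}{K^2X^2}$, and the bandit multiclass hinge loss $$\ell_t(\mathbf W)=\begin{cases}\frac{\mathbb 1[y'_t=y_t]}{p'_t(y'_t)}\max\{1-m_t(\mathbf W,y_t),0\}&\text{if } m_t^\star\le\beta,\\ \frac{\mathbb 1[y'_t=y_t]}{p'_t(y'_t)}\max\{1-m_t(\mathbf W,y_t),0\}&\text{if } y_t^\star\ne y_t\text{ and } m_t^\star>\beta,\\ 0&\text{if } y'_t=y_t^\star=y_t\text{ and } m_t^\star>\beta.\end{cases}$$ Then for every $\mathbf U\in\mathcal W$, $$\mathbb E\Big[\sum_{t=1}^T\mathbb 1[y'_t\ne y_t]\Big]\le\mathbb E\Big[\sum_{t=1}^T\ell_t(\mathbf U)\Big]+\max\Big\{\frac{K^3X^2D^2}{K-1},\ 2KXD\sqrt{\frac T2}\Big\}.$$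
   Context: Setting and notation. Fix integers $K\ge 2$, $d\ge1$, $T\ge1$ and reals $X>0$, $D>0$. Matrices $\mathbf W\in\mathbb{R}^{K\times d}$ have rows $\mathbf W^1,\dots,\mathbf W^K\in\mathbb{R}^d$ and are identified with vectors in $\mathbb{R}^{Kd}$; $\langle\cdot,\cdot\rangle$ is the Euclidean inner product and $\|\cdot\|$ the Euclidean (Frobenius) norm. $\mathcal W=\{\mathbf W:\|\mathbf W\|\le D\}$. $\mathbf e_k$ is the $k$-th standard basis vector of $\mathbb R^K$ and $\mathbf 1\in\mathbb R^K$ the all-ones vector. In each round $t=1,\dots,T$ the environment chooses a label $y_t\in\{1,\dots,K\}$ and a feature vector $\mathbf x_t\in\mathbb R^d$ with $\|\mathbf x_t\|\le X$ (possibly depending on the learner's past predictions $y'_1,\dots,y'_{t-1}$ but not on its current random draw); the learner sees $\mathbf x_t$, outputs a random label $y'_t$, and then observes $y_t$ (full-information setting) or only $\mathbb 1[y'_t\ne y_t]$ (bandit setting). Gaptron, with learning rate $\eta>0$, exploration rate $\gamma\in[0,1]$, gap map $a:\mathbb R^{K\times d}\times\mathbb R^d\to[0,1]$ and loss functions $\ell_t$: set $\mathbf W_1=\mathbf 0$; for $t=1,\dots,T$: let $y_t^\star=\arg\max_k\langle \mathbf W_t^k,\mathbf x_t\rangle$ (ties broken arbitrarily), $a_t=a(\mathbf W_t,\mathbf x_t)$, $\mathbf p'_t=(1-\max\{a_t,\gamma\})\mathbf e_{y_t^\star}+\max\{a_t,\gamma\}\frac1K\mathbf 1$; draw $y'_t\sim\mathbf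 p'_t$ ($p'_t(k)$ denotes the probability of label $k$); set $\mathbf g_t=\nabla\ell_t(\mathbf W_t)$; update $\mathbf W_{t+1}=\arg\min_{\mathbf W\in\mathcal W}\ \eta\langle\mathbf g_t,\mathbf W\rangle+\frac12\|\mathbf W-\mathbf W_t\|^2$. $\mathbb E$ denotes expectation over the learner's randomization. Margins: $m_t(\mathbf W,y)=\langle\mathbf W^y,\mathbf x_t\rangle-\max_{k\ne y}\langle\mathbf W^k,\mathbf x_t\rangle$ and $m_t^\star=\max_k m_t(\mathbf W_t,k)$, where $\mathbf W_t$ is Gaptron's current iterate; in the definition of $\ell_t$ the case distinction uses $y_t^\star$ and $m_t^\star$ computed from $\mathbf W_t$. Where $\ell_t$ is nonzero and the hinge is active, $\mathbf g_t=\frac{\mathbb 1[y'_t=y_t]}{p'_t(y'_t)}(\mathbf e_{\tilde k}-\mathbf e_{y_t})\otimes\mathbf x_t$ with $\tilde k=\arg\max_{k\ne y_t}\langle\mathbf W_t^k,\mathbf x_t\rangle$, where $\mathbf v\otimes\mathbf x$ is the $K\times d$ matrix with rows $v_k\mathbf x$. *)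

theory Defs
  imports "HOL-Analysis.Analysis" "HOL-Probability.Probability"
begin

text \<open>Labels are elements of a finite type 'k (K = CARD('k)); features are in real^'d;
  a weight matrix W is an element of real^'d^'k (row W$k), whose norm is the Frobenius norm.\<close>

type_synonym ('d,'k) wmat = "real^'d^'k"

definition margin :: "('d::finite,'k::finite) wmat \<Rightarrow> real^'d \<Rightarrow> 'k \<Rightarrow> real" where
  "margin W x y = inner (W$y) x - Max {inner (W$k) x | k. k \<noteq> y}"

definition mstar :: "('d::finite,'k::finite) wmat \<Rightarrow> real^'d \<Rightarrow> real" where
  "mstar W x = Max (range (margin W x))"

definition is_argmax_rule :: "(('d::finite,'k::finite) wmat \<Rightarrow> real^'d \<Rightarrow> 'k) \<Rightarrow> bool" where
  "is_argmax_rule sel \<longleftrightarrow> (\<forall>W x k. inner (W$k) x \<le> inner (W$(sel W x)) x)"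

definition is_argmax_other_rule :: "(('d::finite,'k::finite) wmat \<Rightarrow> real^'d \<Rightarrow> 'k \<Rightarrow> 'k) \<Rightarrow> bool" where
  "is_argmax_other_rule sel2 \<longleftrightarrow>
     (\<forall>W x y. sel2 W x y \<noteq> y \<and> (\<forall>k. k \<noteq> y \<longrightarrow> inner (W$k) x \<le> inner (W$(sel2 W x y)) x))"

definition gap_map :: "real \<Rightarrow> ('d::finite,'k::finite) wmat \<Rightarrow> real^'d \<Rightarrow> real" where
  "gap_map beta W x = 1 - max (if mstar W x > beta then 1 else 0) (mstar W x)"

text \<open>Prediction distribution p'_t = (1 - c) e_{y*} + c (1/K) 1, with c = max{a_t, gamma}.\<close>
definition pdist :: "(('d::finite,'k::finite) wmat \<Rightarrow> real^'d \<Rightarrow> 'k) \<Rightarrow> real \<Rightarrow> real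
                     \<Rightarrow> ('d,'k) wmat \<Rightarrow> real^'d \<Rightarrow> 'k pmf" where
  "pdist sel gam a W x =
     bind_pmf (bernoulli_pmf (max a gam))
       (\<lambda>b. if b then pmf_of_set UNIV else return_pmf (sel W x))"

text \<open>Bandit multiclass hinge loss l_t evaluated at U (y* and m* are computed from W = W_t).\<close>
definition bloss :: "real \<Rightarrow> (('d::finite,'k::finite) wmat \<Rightarrow> real^'d \<Rightarrow> 'k) \<Rightarrow> ('d,'k) wmat
                     \<Rightarrow> real^'d \<Rightarrow> 'k \<Rightarrow> 'k \<Rightarrow> real \<Rightarrow> ('d,'k) wmat \<Rightarrow> real" where
  "bloss beta sel W x y y' p U =
     (if y' = sel W x \<and> sel W x = y \<and> mstar W x > beta then 0
      else (if y' = y then 1 / p else 0) * max (1 - margin U x y) 0)"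

definition bgrad :: "real \<Rightarrow> (('d::finite,'k::finite) wmat \<Rightarrow> real^'d \<Rightarrow> 'k)
                     \<Rightarrow> (('d,'k) wmat \<Rightarrow> real^'d \<Rightarrow> 'k \<Rightarrow> 'k) \<Rightarrow> ('d,'k) wmat
                     \<Rightarrow> real^'d \<Rightarrow> 'k \<Rightarrow> 'k \<Rightarrow> real \<Rightarrow> ('d,'k) wmat" where
  "bgrad beta sel sel2 W x y y' p =
     (if y' = sel W x \<and> sel W x = y \<and> mstar W x > beta then 0
      else if y' = y \<and> 1 - margin W x y > 0
        then (1 / p) *\<^sub>R (\<chi> k. ((if k = sel2 W x y then 1 else 0) - (if k = y then 1 else 0)) *\<^sub>R x)
        else 0)"

definition proj_step :: "real \<Rightarrow> real \<Rightarrow> ('d::finite,'k::finite) wmat \<Rightarrow> ('d,'k) wmat \<Rightarrow> ('d,'k) wmat" where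
  "proj_step eta D W g =
     (SOME V. norm V \<le> D \<and>
        (\<forall>V'. norm V' \<le> D \<longrightarrow>
           eta * inner g V + (norm (V - W))\<^sup>2 / 2 \<le> eta * inner g V' + (norm (V' - W))\<^sup>2 / 2))"

text \<open>Iterates: Wt ... h t is W_{t+1} (0-indexed rounds) given the learner's predictions h
  (h ! t is the prediction of round t, env (take t h) = (y_t, x_t)).\<close>
primrec Wt :: "('k::finite list \<Rightarrow> 'k \<times> (real^'d::finite)) \<Rightarrow> (('d,'k) wmat \<Rightarrow> real^'d \<Rightarrow> 'k)
               \<Rightarrow> (('d,'k) wmat \<Rightarrow> real^'d \<Rightarrow> 'k \<Rightarrow> 'k) \<Rightarrow> real \<Rightarrow> real \<Rightarrow> real \<Rightarrow> real
               \<Rightarrow> 'k list \<Rightarrow> nat \<Rightarrow> ('d,'k) wmat" where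
  "Wt env sel sel2 beta gam eta D h 0 = 0"
| "Wt env sel sel2 beta gam eta D h (Suc t) =
     (let W = Wt env sel sel2 beta gam eta D h t;
          y = fst (env (take t h)); x = snd (env (take t h));
          P = pdist sel gam (gap_map beta W x) W x;
          y' = h ! t
      in proj_step eta D W (bgrad beta sel sel2 W x y y' (pmf P y')))"

definition Pt :: "('k::finite list \<Rightarrow> 'k \<times> (real^'d::finite)) \<Rightarrow> (('d,'k) wmat \<Rightarrow> real^'d \<Rightarrow> 'k)
               \<Rightarrow> (('d,'k) wmat \<Rightarrow> real^'d \<Rightarrow> 'k \<Rightarrow> 'k) \<Rightarrow> real \<Rightarrow> real \<Rightarrow> real \<Rightarrow> real
               \<Rightarrow> 'k list \<Rightarrow> nat \<Rightarrow> 'k pmf" where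
  "Pt env sel sel2 beta gam eta D h t =
     (let W = Wt env sel sel2 beta gam eta D h t; x = snd (env (take t h))
      in pdist sel gam (gap_map beta W x) W x)"

primrec hist :: "('k::finite list \<Rightarrow> 'k \<times> (real^'d::finite)) \<Rightarrow> (('d,'k) wmat \<Rightarrow> real^'d \<Rightarrow> 'k)
               \<Rightarrow> (('d,'k) wmat \<Rightarrow> real^'d \<Rightarrow> 'k \<Rightarrow> 'k) \<Rightarrow> real \<Rightarrow> real \<Rightarrow> real \<Rightarrow> real
               \<Rightarrow> nat \<Rightarrow> 'k list pmf" where
  "hist env sel sel2 beta gam eta D 0 = return_pmf []"
| "hist env sel sel2 beta gam eta D (Suc t) =
     bind_pmf (hist env sel sel2 beta gam eta D t)
       (\<lambda>h. map_pmf (\<lambda>y'. h @ [y']) (Pt env sel sel2 beta gam eta D h t))"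

definition loss_t :: "('k::finite list \<Rightarrow> 'k \<times> (real^'d::finite)) \<Rightarrow> (('d,'k) wmat \<Rightarrow> real^'d \<Rightarrow> 'k)
               \<Rightarrow> (('d,'k) wmat \<Rightarrow> real^'d \<Rightarrow> 'k \<Rightarrow> 'k) \<Rightarrow> real \<Rightarrow> real \<Rightarrow> real \<Rightarrow> real
               \<Rightarrow> 'k list \<Rightarrow> nat \<Rightarrow> ('d,'k) wmat \<Rightarrow> real" where
  "loss_t env sel sel2 beta gam eta D h t U =
     (let W = Wt env sel sel2 beta gam eta D h t;
          y = fst (env (take t h)); x = snd (env (take t h)); y' = h ! t
      in bloss beta sel W x y y' (pmf (Pt env sel sel2 beta gam eta D h t) y') U)"

end

theory Submission
  imports Defs
begin

text \<open>
  Along every history, convexity of the hinge loss gives \<open>\<ell>\<^sub>t(W\<^sub>t) - \<ell>\<^sub>t(U) \<le> \<langle>g\<^sub>t, W\<^sub>t - U\<rangle>\<close>, and the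
  projected gradient step bounds \<open>\<langle>g\<^sub>t, W\<^sub>t - U\<rangle>\<close> by the decrease of \<open>\<parallel>U - W\<^sub>t\<parallel>\<^sup>2/(2\<eta>)\<close> plus
  \<open>\<eta>/2 \<parallel>g\<^sub>t\<parallel>\<^sup>2\<close>. Telescoping, the number of mistakes exceeds the comparator loss by at most
  \<open>D\<^sup>2/(2\<eta>)\<close> plus the sum of the surrogate gaps \<open>1[y'\<^sub>t \<noteq> y\<^sub>t] - \<ell>\<^sub>t(W\<^sub>t) + \<eta>/2 \<parallel>g\<^sub>t\<parallel>\<^sup>2\<close>.
  The importance weight makes \<open>\<parallel>g\<^sub>t\<parallel>\<^sup>2 \<le> 2X\<^sup>2/p'\<^sub>t(y\<^sub>t)\<^sup>2\<close>, and the gap map puts enough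
  probability on \<open>y\<^sub>t\<close> that, conditionally on the past, each surrogate gap has expectation at most
  \<open>\<gamma>(K-1)/K\<close>; this is checked by cases on whether \<open>y\<^sup>\<star>\<^sub>t = y\<^sub>t\<close> and whether \<open>m\<^sup>\<star>\<^sub>t > 1/K\<close>.
  The choice of \<open>\<gamma>\<close> and \<open>\<eta>\<close> balances \<open>T\<gamma>(K-1)/K\<close> against \<open>D\<^sup>2/(2\<eta>)\<close>.
\<close>

section \<open>Margins\<close>

lemma finite_inner_others: "finite {inner (W$k) x | k. k \<noteq> (y::'k::finite)}"
  by (simp add: setcompr_eq_image)

lemma margin_le_inner_diff:
  "k \<noteq> y \<Longrightarrow> margin W x y \<le> inner (W$y) x - inner (W$k) x"
  unfolding margin_def by (auto intro: Max_ge[OF finite_inner_others])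

lemma margin_eq_if_max_other:
  fixes W :: "('d::finite,'k::finite) wmat"
  assumes "k \<noteq> y" and "\<And>j. j \<noteq> y \<Longrightarrow> inner (W$j) x \<le> inner (W$k) x"
  shows "margin W x y = inner (W$y) x - inner (W$k) x"
proof -
  have "Max {inner (W$j) x | j. j \<noteq> y} = inner (W$k) x"
    using assms by (intro Max_eqI[OF finite_inner_others]) auto
  thus ?thesis unfolding margin_def by simp
qed

lemma margin_sel2:
  assumes "is_argmax_other_rule sel2"
  shows "margin W x y = inner (W$y) x - inner (W$(sel2 W x y)) x"
  using assms by (intro margin_eq_if_max_other) (auto simp: is_argmax_other_rule_def)

context
  fixes sel :: "('d::finite,'k::finite) wmat \<Rightarrow> real^'d \<Rightarrow> 'k"
    and sel2 :: "('d,'k) wmat \<Rightarrow> real^'d \<Rightarrow> 'k \<Rightarrow> 'k"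
  assumes sel: "is_argmax_rule sel" and sel2: "is_argmax_other_rule sel2"
begin

lemma margin_not_sel:
  "y \<noteq> sel W x \<Longrightarrow> margin W x y = inner (W$y) x - inner (W$(sel W x)) x"
  using sel by (intro margin_eq_if_max_other) (auto simp: is_argmax_rule_def)

lemma margin_sel_nonneg: "0 \<le> margin W x (sel W x)"
  using sel by (simp add: margin_sel2[OF sel2] is_argmax_rule_def)

lemma mstar_eq_margin_sel: "mstar W x = margin W x (sel W x)"
  unfolding mstar_def
proof (rule Max_eqI)
  fix m assume "m \<in> range (margin W x)"
  then obtain k where m: "m = margin W x k" by blast
  show "m \<le> margin W x (sel W x)"
  proof (cases "k = sel W x")
    case False
    have "inner (W$k) x \<le> inner (W$(sel W x)) x" using sel by (simp add: is_argmax_rule_def)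
    thus ?thesis using m margin_not_sel[OF False] margin_sel_nonneg[of W x] by simp
  qed (simp add: m)
qed auto

lemma mstar_nonneg: "0 \<le> mstar (W :: ('d,'k) wmat) x"
  using margin_sel_nonneg[of W x] by (simp only: mstar_eq_margin_sel)

lemma margin_le_neg_mstar:
  assumes "y \<noteq> sel W x"
  shows "margin W x y \<le> - mstar W x"
proof -
  have "inner (W$y) x \<le> inner (W$(sel2 W x (sel W x))) x"
    using sel2 assms by (simp add: is_argmax_other_rule_def)
  thus ?thesis
    using margin_not_sel[OF assms] margin_sel2[OF sel2, of W x "sel W x"] by (simp add: mstar_eq_margin_sel)
qed

end

section \<open>The bandit hinge loss and its gradient\<close>

lemma pmf_pdist:
  fixes sel :: "('d::finite,'k::finite) wmat \<Rightarrow> real^'d \<Rightarrow> 'k"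
  assumes "0 \<le> max a \<gamma>" and "max a \<gamma> \<le> 1"
  shows "pmf (pdist sel \<gamma> a W x) k
           = max a \<gamma> / real CARD('k) + (1 - max a \<gamma>) * (if k = sel W x then 1 else 0)"
  unfolding pdist_def pmf_bind using assms by (simp add: integral_bernoulli_pmf)

definition outer_basis_diff :: "'k::finite \<Rightarrow> 'k \<Rightarrow> real^'d::finite \<Rightarrow> ('d,'k) wmat" where
  "outer_basis_diff a b x = (\<chi> k. ((if k = a then 1 else 0) - (if k = b then 1 else 0)) *\<^sub>R x)"

lemma inner_outer_basis_diff:
  "inner (outer_basis_diff a b x) M = inner (M$a) x - inner (M$b) x"
proof -
  have "inner (outer_basis_diff a b x) M
      = (\<Sum>i\<in>UNIV. ((if i = a then 1 else 0) - (if i = b then 1 else 0)) * inner x (M$i))"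
    unfolding outer_basis_diff_def inner_vec_def by (simp add: sum_distrib_left mult.assoc)
  thus ?thesis by (simp add: left_diff_distrib sum_subtractf inner_commute if_distrib[of "\<lambda>c. c * _"] cong: if_cong)
qed

lemma norm_outer_basis_diff_sq:
  assumes "a \<noteq> b"
  shows "(norm (outer_basis_diff a b x))\<^sup>2 = 2 * (norm x)\<^sup>2"
proof -
  have "(norm (outer_basis_diff a b x))\<^sup>2
      = (\<Sum>i\<in>UNIV. ((if i = a then 1 else 0) + (if i = b then 1 else 0)) * (norm x)\<^sup>2)"
    unfolding norm_vec_def L2_set_def outer_basis_diff_def
    by (simp add: sum_nonneg power_mult_distrib) (intro sum.cong, use assms in auto)
  thus ?thesis by (simp add: sum.distrib sum_distrib_right[symmetric])
qed

lemma bloss_bgrad_inactive: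
  assumes "y' \<noteq> y \<or> (y' = sel W x \<and> sel W x = y \<and> \<beta> < mstar W x)"
  shows "bloss \<beta> sel W x y y' p U = 0" and "bgrad \<beta> sel sel2 W x y y' p = 0"
  using assms unfolding bloss_def bgrad_def by auto

lemma bloss_bgrad_active:
  assumes "\<not> (sel W x = y \<and> \<beta> < mstar W x)"
  shows "bloss \<beta> sel W x y y p U = max (1 - margin U x y) 0 / p"
    and "bgrad \<beta> sel sel2 W x y y p
           = (if 0 < 1 - margin W x y then (1 / p) *\<^sub>R outer_basis_diff (sel2 W x y) y x else 0)"
proof -
  have active: "\<not> (y = sel W x \<and> sel W x = y \<and> \<beta> < mstar W x)" using assms by blast
  show "bloss \<beta> sel W x y y p U = max (1 - margin U x y) 0 / p"
    unfolding bloss_def if_not_P[OF active] by simp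
  show "bgrad \<beta> sel sel2 W x y y p
           = (if 0 < 1 - margin W x y then (1 / p) *\<^sub>R outer_basis_diff (sel2 W x y) y x else 0)"
    unfolding bgrad_def outer_basis_diff_def if_not_P[OF active] by simp
qed

lemma bloss_subgradient:
  fixes W U :: "('d::finite,'k::finite) wmat"
  assumes sel2: "is_argmax_other_rule sel2" and p: "0 \<le> p"
  shows "bloss \<beta> sel W x y y' p W + inner (bgrad \<beta> sel sel2 W x y y' p) (U - W)
           \<le> bloss \<beta> sel W x y y' p U"
proof (cases "y' \<noteq> y \<or> (y' = sel W x \<and> sel W x = y \<and> \<beta> < mstar W x)")
  case True
  then show ?thesis by (simp add: bloss_bgrad_inactive)
next
  case False
  hence y': "y' = y" and active: "\<not> (sel W x = y \<and> \<beta> < mstar W x)" by auto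
  have loss: "bloss \<beta> sel W x y y p Z = max (1 - margin Z x y) 0 / p" for Z
    using active by (rule bloss_bgrad_active(1))
  have grad: "bgrad \<beta> sel sel2 W x y y p
      = (if 0 < 1 - margin W x y then (1 / p) *\<^sub>R outer_basis_diff (sel2 W x y) y x else 0)"
    using active by (rule bloss_bgrad_active(2))
  define k where "k = sel2 W x y"
  have "k \<noteq> y" using sel2 by (simp add: k_def is_argmax_other_rule_def)
  show ?thesis
  proof (cases "0 < 1 - margin W x y")
    case True
    have "1 - margin W x y + inner (outer_basis_diff k y x) (U - W) \<le> max (1 - margin U x y) 0"
      using margin_sel2[OF sel2, of W x y] margin_le_inner_diff[OF \<open>k \<noteq> y\<close>, of U x]
      by (simp add: inner_outer_basis_diff inner_diff_left k_def)
    hence "(1 - margin W x y + inner (outer_basis_diff k y x) (U - W)) / p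
             \<le> max (1 - margin U x y) 0 / p"
      using p by (rule divide_right_mono)
    with True show ?thesis
      unfolding y' loss grad k_def[symmetric] by (simp add: add_divide_distrib)
  next
    case False
    with p show ?thesis unfolding y' loss grad by simp
  qed
qed

section \<open>The projected gradient step\<close>

lemma nonneg_if_nonneg_along_segment:
  fixes a b :: real
  assumes "\<And>s. 0 < s \<Longrightarrow> s \<le> 1 \<Longrightarrow> 0 \<le> a + s * b"
  shows "0 \<le> a"
proof (rule tendsto_lowerbound)
  show "((\<lambda>s. a + s * b) \<longlongrightarrow> a) (at_right 0)"
    by (auto intro!: tendsto_eq_intros)
  show "\<forall>\<^sub>F s in at_right 0. 0 \<le> a + s * b"
    using assms by (auto simp: eventually_at_right_field intro: exI[of _ 1])
qed simp

text \<open>Moving from the minimiser \<open>V\<close> towards \<open>U\<close> stays in \<open>C\<close>, so the one-sided derivative of the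
  objective along this segment is nonnegative.\<close>

lemma proximal_step_optimality:
  fixes g W V U :: "'a::real_inner"
  assumes "convex C" and "U \<in> C" and "V \<in> C"
    and min: "\<And>V'. V' \<in> C \<Longrightarrow> \<eta> * inner g V + (norm (V - W))\<^sup>2 / 2 \<le> \<eta> * inner g V' + (norm (V' - W))\<^sup>2 / 2"
  shows "0 \<le> \<eta> * inner g (U - V) + inner (V - W) (U - V)"
proof (rule nonneg_if_nonneg_along_segment)
  fix s :: real assume s: "0 < s" "s \<le> 1"
  define d where "d = U - V"
  have "V + s *\<^sub>R d = (1 - s) *\<^sub>R V + s *\<^sub>R U" by (simp add: d_def algebra_simps)
  hence "V + s *\<^sub>R d \<in> C" using \<open>convex C\<close> \<open>U \<in> C\<close> \<open>V \<in> C\<close> s by (simp add: convexD)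
  from min[OF this] have "0 \<le> \<eta> * inner g (s *\<^sub>R d) + ((norm (V - W + s *\<^sub>R d))\<^sup>2 - (norm (V - W))\<^sup>2) / 2"
    by (simp add: inner_add_right algebra_simps diff_divide_distrib)
  also have "(norm (V - W + s *\<^sub>R d))\<^sup>2 - (norm (V - W))\<^sup>2 = 2 * s * inner (V - W) d + s\<^sup>2 * (norm d)\<^sup>2"
    unfolding power2_norm_eq_inner
    by (simp add: inner_add_left inner_add_right inner_commute power2_eq_square algebra_simps)
  also have "\<eta> * inner g (s *\<^sub>R d) + (2 * s * inner (V - W) d + s\<^sup>2 * (norm d)\<^sup>2) / 2
      = s * ((\<eta> * inner g d + inner (V - W) d) + s * ((norm d)\<^sup>2 / 2))"
    by (simp add: power2_eq_square field_simps)
  finally have "0 \<le> s * ((\<eta> * inner g d + inner (V - W) d) + s * ((norm d)\<^sup>2 / 2))" .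
  with s show "0 \<le> \<eta> * inner g (U - V) + inner (V - W) (U - V) + s * ((norm d)\<^sup>2 / 2)"
    by (simp add: zero_le_mult_iff d_def)
qed

lemma proximal_step_regret:
  fixes g W V U :: "'a::real_inner"
  assumes "0 < \<eta>" and "convex C" and "U \<in> C" and "V \<in> C"
    and "\<And>V'. V' \<in> C \<Longrightarrow> \<eta> * inner g V + (norm (V - W))\<^sup>2 / 2 \<le> \<eta> * inner g V' + (norm (V' - W))\<^sup>2 / 2"
  shows "inner g (W - U) \<le> ((norm (U - W))\<^sup>2 - (norm (U - V))\<^sup>2) / (2 * \<eta>) + \<eta> / 2 * (norm g)\<^sup>2"
proof -
  have opt: "0 \<le> \<eta> * inner g (U - V) + inner (V - W) (U - V)"
    using assms(2-) by (rule proximal_step_optimality)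
  have three_point: "inner (V - W) (U - V) = ((norm (U - W))\<^sup>2 - (norm (V - W))\<^sup>2 - (norm (U - V))\<^sup>2) / 2"
    using dot_norm[of "V - W" "U - V"] by simp
  have young: "\<eta> * inner g (W - V) \<le> (\<eta>\<^sup>2 * (norm g)\<^sup>2 + (norm (V - W))\<^sup>2) / 2"
    using dot_norm_neg[of "\<eta> *\<^sub>R g" "W - V"]
    by (simp add: power_mult_distrib norm_minus_commute[of W V])
  have "\<eta> * inner g (W - U) = \<eta> * inner g (W - V) - \<eta> * inner g (U - V)"
    by (simp add: inner_diff_right algebra_simps)
  hence "\<eta> * inner g (W - U) \<le> (\<eta>\<^sup>2 * (norm g)\<^sup>2 + (norm (U - W))\<^sup>2 - (norm (U - V))\<^sup>2) / 2"
    using opt three_point young by argo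
  with \<open>0 < \<eta>\<close> show ?thesis
    by (simp add: field_simps power2_eq_square)
qed

lemma proj_step_minimizes:
  fixes W g :: "('d::finite,'k::finite) wmat"
  assumes "0 \<le> D"
  shows "norm (proj_step \<eta> D W g) \<le> D \<and>
    (\<forall>V'. norm V' \<le> D \<longrightarrow> \<eta> * inner g (proj_step \<eta> D W g) + (norm (proj_step \<eta> D W g - W))\<^sup>2 / 2
                            \<le> \<eta> * inner g V' + (norm (V' - W))\<^sup>2 / 2)"
proof -
  have "\<exists>V\<in>cball 0 D. \<forall>V'\<in>cball 0 D.
          \<eta> * inner g V + (norm (V - W))\<^sup>2 / 2 \<le> \<eta> * inner g V' + (norm (V' - W))\<^sup>2 / 2"
    using assms by (intro continuous_attains_inf) (auto intro!: continuous_intros)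
  hence "\<exists>V. norm V \<le> D \<and> (\<forall>V'. norm V' \<le> D \<longrightarrow>
           \<eta> * inner g V + (norm (V - W))\<^sup>2 / 2 \<le> \<eta> * inner g V' + (norm (V' - W))\<^sup>2 / 2)"
    by auto
  thus ?thesis unfolding proj_step_def by (rule someI_ex)
qed

lemma proj_step_regret:
  fixes W g U :: "('d::finite,'k::finite) wmat"
  assumes "0 < \<eta>" and "norm U \<le> D"
  shows "inner g (W - U)
           \<le> ((norm (U - W))\<^sup>2 - (norm (U - proj_step \<eta> D W g))\<^sup>2) / (2 * \<eta>) + \<eta> / 2 * (norm g)\<^sup>2"
proof -
  have "0 \<le> D" using assms(2) norm_ge_zero order_trans by blast
  from proj_step_minimizes[OF this] show ?thesis
    using assms by (intro proximal_step_regret[where C = "cball 0 D"]) auto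
qed

section \<open>The surrogate gap\<close>

definition surrogate_gap :: "real \<Rightarrow> (('d::finite,'k::finite) wmat \<Rightarrow> real^'d \<Rightarrow> 'k)
    \<Rightarrow> (('d,'k) wmat \<Rightarrow> real^'d \<Rightarrow> 'k \<Rightarrow> 'k) \<Rightarrow> real \<Rightarrow> ('d,'k) wmat \<Rightarrow> real^'d
    \<Rightarrow> 'k \<Rightarrow> 'k \<Rightarrow> real \<Rightarrow> real" where
  "surrogate_gap \<beta> sel sel2 \<eta> W x y y' p =
     (if y' \<noteq> y then 1 else 0) - bloss \<beta> sel W x y y' p W
       + \<eta> / 2 * (norm (bgrad \<beta> sel sel2 W x y y' p))\<^sup>2"

lemma round_regret:
  fixes W U :: "('d::finite,'k::finite) wmat"
  assumes sel2: "is_argmax_other_rule sel2" and "0 < \<eta>" and "norm U \<le> D" and "0 \<le> p"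
  shows "(if y' \<noteq> y then 1 else 0) - bloss \<beta> sel W x y y' p U
           \<le> surrogate_gap \<beta> sel sel2 \<eta> W x y y' p
             + ((norm (U - W))\<^sup>2 - (norm (U - proj_step \<eta> D W (bgrad \<beta> sel sel2 W x y y' p)))\<^sup>2)
               / (2 * \<eta>)"
proof -
  define G where "G = bgrad \<beta> sel sel2 W x y y' p"
  have "inner G (U - W) = - inner G (W - U)" by (simp add: inner_diff_right)
  thus ?thesis
    using bloss_subgradient[OF sel2 \<open>0 \<le> p\<close>, of \<beta> sel W x y y' U]
      proj_step_regret[OF \<open>0 < \<eta>\<close> \<open>norm U \<le> D\<close>, of G W]
    unfolding surrogate_gap_def G_def by linarith
qed

lemma expectation_eq_off_label_const:
  fixes P :: "'a::finite pmf"
  assumes "\<And>k. k \<noteq> y \<Longrightarrow> f k = 1"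
  shows "measure_pmf.expectation P f = 1 - pmf P y + pmf P y * f y"
proof -
  have "measure_pmf.expectation P f = (\<Sum>k\<in>UNIV. pmf P k + (if k = y then (f y - 1) * pmf P k else 0))"
    by (subst integral_measure_pmf_real[of UNIV]) (auto simp: assms algebra_simps intro!: sum.cong)
  thus ?thesis by (simp add: sum.distrib sum_pmf_eq_1 algebra_simps)
qed

lemma scaled_surrogate_gap_le:
  assumes sel2: "is_argmax_other_rule sel2"
    and active: "\<not> (sel W x = y \<and> \<beta> < mstar W x)"
    and "0 < p" and "0 \<le> \<eta>" and "norm x \<le> X"
  shows "p * surrogate_gap \<beta> sel sel2 \<eta> W x y y p \<le> \<eta> * X\<^sup>2 / p - max (1 - margin W x y) 0"
proof -
  have loss: "bloss \<beta> sel W x y y p W = max (1 - margin W x y) 0 / p"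
    using active by (rule bloss_bgrad_active(1))
  have grad: "bgrad \<beta> sel sel2 W x y y p
      = (if 0 < 1 - margin W x y then (1 / p) *\<^sub>R outer_basis_diff (sel2 W x y) y x else 0)"
    using active by (rule bloss_bgrad_active(2))
  have "sel2 W x y \<noteq> y" using sel2 by (simp add: is_argmax_other_rule_def)
  hence "(norm (bgrad \<beta> sel sel2 W x y y p))\<^sup>2 \<le> (1 / p)\<^sup>2 * (2 * (norm x)\<^sup>2)"
    using grad \<open>0 < p\<close>
    by (simp add: norm_outer_basis_diff_sq power_divide)
  also have "\<dots> \<le> (1 / p)\<^sup>2 * (2 * X\<^sup>2)"
    using \<open>norm x \<le> X\<close> by (intro mult_left_mono power_mono) auto
  finally have "p * (\<eta> / 2 * (norm (bgrad \<beta> sel sel2 W x y y p))\<^sup>2) \<le> p * (\<eta> / 2 * ((1 / p)\<^sup>2 * (2 * X\<^sup>2)))"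
    using \<open>0 < p\<close> \<open>0 \<le> \<eta>\<close> by (intro mult_left_mono) auto
  thus ?thesis
    using \<open>0 < p\<close> loss
    by (simp add: surrogate_gap_def algebra_simps power2_eq_square)
qed

text \<open>In the next three lemmas \<open>e\<close> stands for \<open>\<eta> X\<^sup>2\<close>, \<open>m\<close> for \<open>m\<^sup>\<star>\<close>, \<open>h\<close> for the hinge
  loss at the true label, and \<open>c\<close> for the exploration weight \<open>max{a, \<gamma>}\<close>.\<close>

lemma mistake_bound_low_margin:
  fixes K \<gamma> e m h c :: real
  assumes K: "2 \<le> K" and \<gamma>: "0 < \<gamma>" "\<gamma> \<le> 1" and e: "0 \<le> e" "e \<le> \<gamma> * (K - 1) / K^3"
    and m: "0 \<le> m" "m \<le> 1 / K" and c: "c = max (1 - m) \<gamma>" and h: "1 + m \<le> h"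
  shows "1 - c / K - h + e / (c / K) \<le> \<gamma> * (K - 1) / K"
proof -
  have "(K - 1) / K \<le> 1 - m" using m K by (simp add: field_simps)
  hence c_ge: "(K - 1) / K \<le> c" using c by linarith
  have "e \<le> (\<gamma> / K) * ((K - 1) / K) / K" using e K by (simp add: field_simps power3_eq_cube)
  also have "\<dots> \<le> (\<gamma> / K) * c / K" using c_ge \<gamma> K by (intro divide_right_mono mult_left_mono) auto
  finally have "e / (c / K) \<le> \<gamma> / K" using c \<gamma> K by (simp add: field_simps)
  moreover have "\<gamma> / K \<le> c / K" using c K by (simp add: divide_right_mono)
  moreover have "0 \<le> \<gamma> * (K - 1) / K" using \<gamma> K by simp
  ultimately show ?thesis using h m by linarith
qed

lemma mistake_bound_high_margin:
  fixes K \<gamma> e m h :: real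
  assumes K: "2 \<le> K" and \<gamma>: "0 < \<gamma>" "\<gamma> \<le> 1" and e: "0 \<le> e" "e \<le> \<gamma> * (K - 1) / K^3"
    and m: "1 / K < m" and h: "1 + m \<le> h"
  shows "1 - \<gamma> / K - h + e / (\<gamma> / K) \<le> \<gamma> * (K - 1) / K"
proof -
  have "\<gamma> * (K - 1) / K^3 = ((K - 1) / K\<^sup>2) * (\<gamma> / K)"
    by (simp add: field_simps power3_eq_cube power2_eq_square)
  hence "e \<le> ((K - 1) / K\<^sup>2) * (\<gamma> / K)" using e by linarith
  moreover have "0 < \<gamma> / K" using \<gamma> K by simp
  ultimately have "e / (\<gamma> / K) \<le> (K - 1) / K\<^sup>2" by (simp only: pos_divide_le_eq)
  moreover have "(K - 1) / K\<^sup>2 \<le> 1 / K" using K by (simp add: field_simps power2_eq_square)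
  moreover have "0 \<le> \<gamma> / K" "0 \<le> \<gamma> * (K - 1) / K" using \<gamma> K by auto
  ultimately show ?thesis using h m by linarith
qed

lemma correct_bound_low_margin:
  fixes K \<gamma> e m c p :: real
  assumes K: "2 \<le> K" and \<gamma>: "0 < \<gamma>" "\<gamma> \<le> 1" and e: "0 \<le> e" "e \<le> \<gamma> * (K - 1) / K^3"
    and m: "0 \<le> m" "m \<le> 1 / K" and c: "c = max (1 - m) \<gamma>" and p: "p = c / K + (1 - c)"
  shows "1 - p - (1 - m) + e / p \<le> \<gamma> * (K - 1) / K"
proof -
  have one_minus_p: "1 - p = c * (K - 1) / K" using p K by (simp add: field_simps)
  have "c * (K - 1) \<le> 1 * (K - 1)" using c m \<gamma> K by (intro mult_right_mono) auto
  hence p_ge: "1 / K \<le> p" using p K by (simp add: field_simps)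
  have "\<gamma> * (K - 1) / K^3 = (\<gamma> * (K - 1) / K\<^sup>2) * (1 / K)"
    by (simp add: field_simps power3_eq_cube power2_eq_square)
  hence "e \<le> (\<gamma> * (K - 1) / K\<^sup>2) * (1 / K)" using e by linarith
  also have "\<dots> \<le> (\<gamma> * (K - 1) / K\<^sup>2) * p" using p_ge \<gamma> K by (intro mult_left_mono) auto
  finally have "e / p \<le> \<gamma> * (K - 1) / K\<^sup>2"
    using p_ge K by (simp add: pos_divide_le_eq order_less_le_trans[of 0 "1 / K" p])
  moreover have "\<gamma> * (K - 1) / K\<^sup>2 \<le> (K - 1) / K\<^sup>2" using \<gamma> K by (simp add: divide_right_mono)
  moreover have "(K - 1) / K\<^sup>2 \<le> (K - 1) / K"
  proof (rule divide_left_mono)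
    show "K \<le> K\<^sup>2" using mult_left_mono[of 1 K K] K by (simp add: power2_eq_square)
  qed (use K in auto)
  moreover have "(K - 1) / K \<le> 1 - m" using m K by (simp add: field_simps)
  moreover have "c * (K - 1) / K - (1 - m) \<le> - ((K - 1) / K\<^sup>2)" if "c = 1 - m"
  proof -
    have "(K - 1) / K\<^sup>2 = (K - 1) / K / K" by (simp add: power2_eq_square)
    also have "\<dots> \<le> (1 - m) / K" using \<open>(K - 1) / K \<le> 1 - m\<close> K by (intro divide_right_mono) auto
    finally have "(K - 1) / K\<^sup>2 \<le> (1 - m) / K" .
    moreover have "c * (K - 1) / K - (1 - m) = - ((1 - m) / K)" using K unfolding that by (simp add: field_simps)
    ultimately show ?thesis by linarith
  qed
  moreover have "0 \<le> \<gamma> * (K - 1) / K" using \<gamma> K by simp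
  ultimately show ?thesis using one_minus_p c by (cases "c = \<gamma>") (auto simp: max_def split: if_splits)
qed

lemma max_gap_map_high:
  "\<beta> < mstar W x \<Longrightarrow> 0 \<le> \<gamma> \<Longrightarrow> max (gap_map \<beta> W x) \<gamma> = \<gamma>"
  by (simp add: gap_map_def)

lemma max_gap_map_low:
  "mstar W x \<le> \<beta> \<Longrightarrow> 0 \<le> mstar W x \<Longrightarrow> max (gap_map \<beta> W x) \<gamma> = max (1 - mstar W x) \<gamma>"
  by (simp add: gap_map_def)

lemma surrogate_gap_active_le:
  fixes W :: "('d::finite,'k::finite) wmat"
    and sel :: "('d,'k) wmat \<Rightarrow> real^'d \<Rightarrow> 'k" and sel2 :: "('d,'k) wmat \<Rightarrow> real^'d \<Rightarrow> 'k \<Rightarrow> 'k"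
  assumes sel: "is_argmax_rule sel" and sel2: "is_argmax_other_rule sel2"
    and K: "2 \<le> K" and \<beta>: "\<beta> = 1 / K"
    and \<gamma>: "0 < \<gamma>" "\<gamma> \<le> 1" and \<eta>: "0 \<le> \<eta>" "\<eta> * X\<^sup>2 \<le> \<gamma> * (K - 1) / K^3"
    and x: "norm x \<le> X" and active: "\<not> (sel W x = y \<and> \<beta> < mstar W x)"
    and c: "c = max (gap_map \<beta> W x) \<gamma>" and p: "p = c / K + (1 - c) * (if y = sel W x then 1 else 0)"
  shows "1 - p + p * surrogate_gap \<beta> sel sel2 \<eta> W x y y p \<le> \<gamma> * (K - 1) / K"
proof -
  define m where "m = mstar W x"
  define h where "h = max (1 - margin W x y) 0"
  have "0 \<le> m" unfolding m_def using sel sel2 by (rule mstar_nonneg)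
  have c_high: "c = \<gamma>" if "\<beta> < m" using that \<gamma> by (simp add: c m_def max_gap_map_high)
  have c_low: "c = max (1 - m) \<gamma>" if "m \<le> \<beta>" using that \<open>0 \<le> m\<close> by (simp add: c m_def max_gap_map_low)
  have "0 < c" "c \<le> 1" using \<gamma> \<open>0 \<le> m\<close> c_high c_low by (cases "\<beta> < m"; force)+
  hence "0 < p" using p K by (auto simp: add_pos_nonneg)
  have "p * surrogate_gap \<beta> sel sel2 \<eta> W x y y p \<le> \<eta> * X\<^sup>2 / p - h"
    unfolding h_def using sel2 active \<open>0 < p\<close> \<eta>(1) x by (rule scaled_surrogate_gap_le)
  moreover have "1 - p - h + \<eta> * X\<^sup>2 / p \<le> \<gamma> * (K - 1) / K"
  proof (cases "y = sel W x")
    case True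
    with active have "m \<le> 1 / K" using \<beta> by (auto simp: m_def)
    moreover have "margin W x y = m" using True sel sel2 by (simp add: mstar_eq_margin_sel m_def)
    moreover have "1 / K < 1" using K by simp
    ultimately have "h = 1 - m" by (simp add: h_def)
    with True show ?thesis
      using correct_bound_low_margin[OF K \<gamma> _ \<eta>(2) \<open>0 \<le> m\<close>] c_low \<open>m \<le> 1 / K\<close> \<beta> \<eta>(1) p by simp
  next
    case False
    have "1 + m \<le> h"
      using margin_le_neg_mstar[OF sel sel2 False] by (simp add: h_def m_def)
    with False show ?thesis
      using mistake_bound_low_margin[OF K \<gamma> _ \<eta>(2) \<open>0 \<le> m\<close>] c_low
        mistake_bound_high_margin[OF K \<gamma> _ \<eta>(2)] c_high \<beta> \<eta>(1) p
      by (cases "\<beta> < m") auto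
  qed
  ultimately show ?thesis by linarith
qed

lemma expected_surrogate_gap_le:
  fixes W :: "('d::finite,'k::finite) wmat"
    and sel :: "('d,'k) wmat \<Rightarrow> real^'d \<Rightarrow> 'k" and sel2 :: "('d,'k) wmat \<Rightarrow> real^'d \<Rightarrow> 'k \<Rightarrow> 'k"
  assumes sel: "is_argmax_rule sel" and sel2: "is_argmax_other_rule sel2"
    and K: "K = real CARD('k)" "2 \<le> K" and \<beta>: "\<beta> = 1 / K"
    and \<gamma>: "0 < \<gamma>" "\<gamma> \<le> 1" and \<eta>: "0 \<le> \<eta>" "\<eta> * X\<^sup>2 \<le> \<gamma> * (K - 1) / K^3"
    and x: "norm x \<le> X"
  defines "P \<equiv> pdist sel \<gamma> (gap_map \<beta> W x) W x"
  shows "measure_pmf.expectation P (\<lambda>y'. surrogate_gap \<beta> sel sel2 \<eta> W x y y' (pmf P y'))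
           \<le> \<gamma> * (K - 1) / K"
proof -
  define c where "c = max (gap_map \<beta> W x) \<gamma>"
  have "0 \<le> mstar W x" using sel sel2 by (rule mstar_nonneg)
  hence "0 \<le> c" "c \<le> 1"
    using \<gamma> max_gap_map_high[of \<beta> W x \<gamma>] max_gap_map_low[of W x \<beta> \<gamma>] unfolding c_def by force+
  hence pmf_P: "pmf P k = c / K + (1 - c) * (if k = sel W x then 1 else 0)" for k
    unfolding P_def K(1) c_def by (rule pmf_pdist)
  have "measure_pmf.expectation P (\<lambda>y'. surrogate_gap \<beta> sel sel2 \<eta> W x y y' (pmf P y'))
      = 1 - pmf P y + pmf P y * surrogate_gap \<beta> sel sel2 \<eta> W x y y (pmf P y)"
    by (rule expectation_eq_off_label_const) (simp add: surrogate_gap_def bloss_bgrad_inactive)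
  also have "\<dots> \<le> \<gamma> * (K - 1) / K"
  proof (cases "sel W x = y \<and> \<beta> < mstar W x")
    case True
    hence "surrogate_gap \<beta> sel sel2 \<eta> W x y y (pmf P y) = 0"
      by (simp add: surrogate_gap_def bloss_bgrad_inactive)
    with True \<gamma> K show ?thesis by (simp add: pmf_P c_def max_gap_map_high field_simps)
  next
    case False
    show ?thesis
      using sel sel2 K(2) \<beta> \<gamma> \<eta> x False c_def pmf_P[of y] by (rule surrogate_gap_active_le)
  qed
  finally show ?thesis .
qed

section \<open>Histories\<close>

lemma expectation_bind_pmf_finite:
  fixes g :: "'b \<Rightarrow> real"
  assumes "finite (set_pmf M)" and "\<And>x. x \<in> set_pmf M \<Longrightarrow> finite (set_pmf (N x))"
  shows "measure_pmf.expectation (bind_pmf M N) g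
           = measure_pmf.expectation M (\<lambda>x. measure_pmf.expectation (N x) g)"
proof -
  define B where "B = (\<Union>x\<in>set_pmf M. set_pmf (N x))"
  have "finite B" unfolding B_def using assms by blast
  have N_sum: "measure_pmf.expectation (N x) g = (\<Sum>z\<in>B. g z * pmf (N x) z)" if "x \<in> set_pmf M" for x
    using \<open>finite B\<close> that by (intro integral_measure_pmf_real) (auto simp: B_def)
  have "measure_pmf.expectation (bind_pmf M N) g = (\<Sum>z\<in>B. g z * (\<Sum>x\<in>set_pmf M. pmf (N x) z * pmf M x))"
    using \<open>finite B\<close> assms(1)
    by (subst integral_measure_pmf_real[of B]) (auto simp: B_def pmf_bind integral_measure_pmf_real)
  also have "\<dots> = (\<Sum>x\<in>set_pmf M. (\<Sum>z\<in>B. g z * pmf (N x) z) * pmf M x)"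
    by (simp add: sum_distrib_left sum_distrib_right mult.assoc sum.swap[of _ B])
  also have "\<dots> = measure_pmf.expectation M (\<lambda>x. measure_pmf.expectation (N x) g)"
    using assms(1) by (subst integral_measure_pmf_real[of "set_pmf M"]) (auto simp: N_sum)
  finally show ?thesis .
qed

context
  fixes env :: "'k::finite list \<Rightarrow> 'k \<times> (real^'d::finite)"
    and sel :: "('d,'k) wmat \<Rightarrow> real^'d \<Rightarrow> 'k"
    and sel2 :: "('d,'k) wmat \<Rightarrow> real^'d \<Rightarrow> 'k \<Rightarrow> 'k"
    and \<beta> \<gamma> \<eta> D :: real
begin

lemma Wt_append: "t \<le> length h \<Longrightarrow> Wt env sel sel2 \<beta> \<gamma> \<eta> D (h @ zs) t = Wt env sel sel2 \<beta> \<gamma> \<eta> D h t"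
  by (induction t) (auto simp: Let_def nth_append)

lemma Pt_append: "t \<le> length h \<Longrightarrow> Pt env sel sel2 \<beta> \<gamma> \<eta> D (h @ zs) t = Pt env sel sel2 \<beta> \<gamma> \<eta> D h t"
  by (simp add: Pt_def Wt_append)

lemma length_hist: "h \<in> set_pmf (hist env sel sel2 \<beta> \<gamma> \<eta> D n) \<Longrightarrow> length h = n"
  by (induction n arbitrary: h) auto

lemma finite_set_pmf_hist: "finite (set_pmf (hist env sel sel2 \<beta> \<gamma> \<eta> D n))"
  by (induction n) (auto intro: finite_subset[OF subset_UNIV])

definition surrogate_gap_t :: "'k list \<Rightarrow> nat \<Rightarrow> real" where
  "surrogate_gap_t h t =
     surrogate_gap \<beta> sel sel2 \<eta> (Wt env sel sel2 \<beta> \<gamma> \<eta> D h t) (snd (env (take t h)))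
       (fst (env (take t h))) (h ! t) (pmf (Pt env sel sel2 \<beta> \<gamma> \<eta> D h t) (h ! t))"

lemma surrogate_gap_t_append: "t < length h \<Longrightarrow> surrogate_gap_t (h @ zs) t = surrogate_gap_t h t"
  by (simp add: surrogate_gap_t_def Wt_append Pt_append nth_append)

lemma surrogate_gap_t_snoc:
  "surrogate_gap_t (h @ [y']) (length h) =
     surrogate_gap \<beta> sel sel2 \<eta> (Wt env sel sel2 \<beta> \<gamma> \<eta> D h (length h)) (snd (env h))
       (fst (env h)) y' (pmf (Pt env sel sel2 \<beta> \<gamma> \<eta> D h (length h)) y')"
  by (simp add: surrogate_gap_t_def Wt_append Pt_append)

lemma expected_sum_surrogate_gap_le:
  assumes sel: "is_argmax_rule sel" and sel2: "is_argmax_other_rule sel2"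
    and K: "K = real CARD('k)" "2 \<le> K" and \<beta>: "\<beta> = 1 / K"
    and \<gamma>: "0 < \<gamma>" "\<gamma> \<le> 1" and \<eta>: "0 \<le> \<eta>" "\<eta> * X\<^sup>2 \<le> \<gamma> * (K - 1) / K^3"
    and X: "\<And>h. norm (snd (env h)) \<le> X"
  shows "measure_pmf.expectation (hist env sel sel2 \<beta> \<gamma> \<eta> D n) (\<lambda>h. \<Sum>t<n. surrogate_gap_t h t)
           \<le> n * (\<gamma> * (K - 1) / K)"
proof (induction n)
  case (Suc n)
  define H where "H = hist env sel sel2 \<beta> \<gamma> \<eta> D n"
  define P where "P = Pt env sel sel2 \<beta> \<gamma> \<eta> D"
  have "finite (set_pmf H)" unfolding H_def by (rule finite_set_pmf_hist)
  have round: "measure_pmf.expectation (P h n) (\<lambda>y'. \<Sum>t<Suc n. surrogate_gap_t (h @ [y']) t)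
      \<le> (\<Sum>t<n. surrogate_gap_t h t) + \<gamma> * (K - 1) / K" if "h \<in> set_pmf H" for h
  proof -
    have "length h = n" using that unfolding H_def by (rule length_hist)
    have "measure_pmf.expectation (P h n) (\<lambda>y'. surrogate_gap_t (h @ [y']) n) \<le> \<gamma> * (K - 1) / K"
      using expected_surrogate_gap_le[OF sel sel2 K \<beta> \<gamma> \<eta> X]
      by (simp add: P_def Pt_def Let_def surrogate_gap_t_snoc flip: \<open>length h = n\<close>)
    moreover have "(\<Sum>t<Suc n. surrogate_gap_t (h @ [y']) t) = surrogate_gap_t (h @ [y']) n + (\<Sum>t<n. surrogate_gap_t h t)" for y'
      using \<open>length h = n\<close> by (simp add: surrogate_gap_t_append)
    ultimately show ?thesis
      by (simp add: integrable_measure_pmf_finite finite_subset[OF subset_UNIV])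
  qed
  have "measure_pmf.expectation (hist env sel sel2 \<beta> \<gamma> \<eta> D (Suc n)) (\<lambda>h. \<Sum>t<Suc n. surrogate_gap_t h t)
      = measure_pmf.expectation H (\<lambda>h. measure_pmf.expectation (P h n)
            (\<lambda>y'. \<Sum>t<Suc n. surrogate_gap_t (h @ [y']) t))"
    unfolding hist.simps H_def[symmetric] P_def
    by (subst expectation_bind_pmf_finite) (auto simp: \<open>finite (set_pmf H)\<close> intro: finite_subset[OF subset_UNIV])
  also have "\<dots> \<le> measure_pmf.expectation H (\<lambda>h. (\<Sum>t<n. surrogate_gap_t h t) + \<gamma> * (K - 1) / K)"
    using round \<open>finite (set_pmf H)\<close>
    by (intro integral_mono_AE) (auto simp: integrable_measure_pmf_finite AE_measure_pmf_iff)
  also have "\<dots> = measure_pmf.expectation H (\<lambda>h. \<Sum>t<n. surrogate_gap_t h t) + \<gamma> * (K - 1) / K"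
    using \<open>finite (set_pmf H)\<close> by (simp add: integrable_measure_pmf_finite)
  also have "\<dots> \<le> real n * (\<gamma> * (K - 1) / K) + \<gamma> * (K - 1) / K"
    using Suc.IH unfolding H_def by linarith
  also have "\<dots> = real (Suc n) * (\<gamma> * (K - 1) / K)"
    by (simp only: of_nat_Suc distrib_right mult_1)
  finally show ?case .
qed simp

lemma mistakes_le_loss_plus_surrogate_gap:
  assumes sel2: "is_argmax_other_rule sel2" and "0 < \<eta>" and "norm U \<le> D"
  shows "(\<Sum>t<T. if h ! t \<noteq> fst (env (take t h)) then 1 else 0)
           \<le> (\<Sum>t<T. loss_t env sel sel2 \<beta> \<gamma> \<eta> D h t U) + (\<Sum>t<T. surrogate_gap_t h t) + D\<^sup>2 / (2 * \<eta>)"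
proof -
  define potential where "potential t = (norm (U - Wt env sel sel2 \<beta> \<gamma> \<eta> D h t))\<^sup>2 / (2 * \<eta>)" for t
  have step: "(if h ! t \<noteq> fst (env (take t h)) then 1 else 0) - loss_t env sel sel2 \<beta> \<gamma> \<eta> D h t U
      \<le> surrogate_gap_t h t + (potential t - potential (Suc t))" for t
  proof -
    define W where "W = Wt env sel sel2 \<beta> \<gamma> \<eta> D h t"
    define x where "x = snd (env (take t h))"
    define y where "y = fst (env (take t h))"
    define p where "p = pmf (Pt env sel sel2 \<beta> \<gamma> \<eta> D h t) (h ! t)"
    have "Wt env sel sel2 \<beta> \<gamma> \<eta> D h (Suc t) = proj_step \<eta> D W (bgrad \<beta> sel sel2 W x y (h ! t) p)"
      by (simp add: W_def x_def y_def p_def Pt_def Let_def)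
    moreover have "loss_t env sel sel2 \<beta> \<gamma> \<eta> D h t U = bloss \<beta> sel W x y (h ! t) p U"
      by (simp add: loss_t_def W_def x_def y_def p_def Let_def)
    moreover have "surrogate_gap_t h t = surrogate_gap \<beta> sel sel2 \<eta> W x y (h ! t) p"
      by (simp add: surrogate_gap_t_def W_def x_def y_def p_def)
    moreover have "0 \<le> p" by (simp add: p_def)
    ultimately show ?thesis
      using round_regret[OF sel2 \<open>0 < \<eta>\<close> \<open>norm U \<le> D\<close> \<open>0 \<le> p\<close>, of "h ! t" y \<beta> sel W x]
      by (simp add: potential_def W_def y_def diff_divide_distrib)
  qed
  have "(\<Sum>t<T. (if h ! t \<noteq> fst (env (take t h)) then 1 else 0) - loss_t env sel sel2 \<beta> \<gamma> \<eta> D h t U)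
      \<le> (\<Sum>t<T. surrogate_gap_t h t + (potential t - potential (Suc t)))"
    by (intro sum_mono step)
  also have "\<dots> = (\<Sum>t<T. surrogate_gap_t h t) + (potential 0 - potential T)"
    by (simp add: sum.distrib sum_lessThan_telescope')
  also have "\<dots> \<le> (\<Sum>t<T. surrogate_gap_t h t) + D\<^sup>2 / (2 * \<eta>)"
  proof -
    have "(norm U)\<^sup>2 \<le> D\<^sup>2" using \<open>norm U \<le> D\<close> by (simp add: power_mono)
    hence "potential 0 \<le> D\<^sup>2 / (2 * \<eta>)" using \<open>0 < \<eta>\<close> by (simp add: potential_def divide_right_mono)
    moreover have "0 \<le> potential T" using \<open>0 < \<eta>\<close> by (simp add: potential_def)
    ultimately show ?thesis by simp
  qed
  finally show ?thesis by (simp add: sum_subtractf)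
qed

end

section \<open>Tuning\<close>

lemma min_one_sqrt_balance:
  fixes A B :: real
  assumes "0 < A" and "0 < B"
  shows "B * min 1 (sqrt (A / B)) + A / min 1 (sqrt (A / B)) \<le> max (2 * A) (2 * sqrt (A * B))"
proof (cases "B \<le> A")
  case True
  hence "min 1 (sqrt (A / B)) = 1" using \<open>0 < B\<close> by simp
  with True show ?thesis by simp
next
  case False
  hence \<gamma>: "min 1 (sqrt (A / B)) = sqrt A / sqrt B" using \<open>0 < A\<close> by (simp add: real_sqrt_divide)
  have sq: "sqrt A * sqrt A = A" "sqrt B * sqrt B = B" "0 < sqrt A" "0 < sqrt B"
    using assms by simp_all
  have "B * (sqrt A / sqrt B) = (sqrt B * sqrt B) * (sqrt A / sqrt B)" by (simp only: sq)
  also have "\<dots> = sqrt A * sqrt B" using sq by (simp add: field_simps)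
  finally have "B * (sqrt A / sqrt B) = sqrt A * sqrt B" .
  moreover have "A / (sqrt A / sqrt B) = sqrt A * sqrt B"
    using sq by (simp add: field_simps)
  ultimately have "B * (sqrt A / sqrt B) + A / (sqrt A / sqrt B) = 2 * sqrt (A * B)"
    unfolding real_sqrt_mult by linarith
  thus ?thesis unfolding \<gamma> using max.cobounded2[of "2 * sqrt (A * B)" "2 * A"] by linarith
qed

lemma gaptron_parameters:
  fixes K X D T \<beta> \<gamma> \<eta> :: real
  assumes K: "2 \<le> K" and X: "0 < X" and D: "0 < D" and T: "1 \<le> T"
    and \<beta>: "\<beta> = 1 / K"
    and \<gamma>: "\<gamma> = min 1 (sqrt (K^3 * X^2 * D^2 / (2 * (1 - \<beta>) * (K - 1) * T)))"
    and \<eta>: "\<eta> = \<gamma> * (1 - \<beta>) / (K^2 * X^2)"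
  shows "0 < \<gamma>" and "\<gamma> \<le> 1" and "0 < \<eta>" and "\<eta> * X\<^sup>2 \<le> \<gamma> * (K - 1) / K^3"
proof -
  have one_minus_\<beta>: "1 - \<beta> = (K - 1) / K" using \<beta> K by (simp add: field_simps)
  have "0 < K^3 * X^2 * D^2 / (2 * (1 - \<beta>) * (K - 1) * T)"
    using K X D T by (simp add: one_minus_\<beta>)
  thus "0 < \<gamma>" and "\<gamma> \<le> 1" by (simp_all add: \<gamma>)
  thus "0 < \<eta>" and "\<eta> * X\<^sup>2 \<le> \<gamma> * (K - 1) / K^3"
    using K X by (simp_all add: \<eta> one_minus_\<beta> field_simps power2_eq_square power3_eq_cube)
qed

lemma gaptron_tuning_bound:
  fixes K X D T \<beta> \<gamma> \<eta> :: real
  assumes K: "2 \<le> K" and X: "0 < X" and D: "0 < D" and T: "1 \<le> T"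
    and \<beta>: "\<beta> = 1 / K"
    and \<gamma>: "\<gamma> = min 1 (sqrt (K^3 * X^2 * D^2 / (2 * (1 - \<beta>) * (K - 1) * T)))"
    and \<eta>: "\<eta> = \<gamma> * (1 - \<beta>) / (K^2 * X^2)"
  shows "T * (\<gamma> * (K - 1) / K) + D^2 / (2 * \<eta>)
           \<le> max (K^3 * X^2 * D^2 / (K - 1)) (2 * K * X * D * sqrt (T / 2))"
proof -
  define A where "A = D^2 * K^3 * X^2 / (2 * (K - 1))"
  define B where "B = T * (K - 1) / K"
  have "0 < A" "0 < B" using K X D T by (simp_all add: A_def B_def)
  have one_minus_\<beta>: "1 - \<beta> = (K - 1) / K" using \<beta> K by (simp add: field_simps)
  have \<gamma>_AB: "\<gamma> = min 1 (sqrt (A / B))"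
    unfolding \<gamma> A_def B_def one_minus_\<beta> using K T by (simp add: field_simps power2_eq_square power3_eq_cube)
  hence "0 < \<gamma>" using \<open>0 < A\<close> \<open>0 < B\<close> by simp
  have "D^2 / (2 * \<eta>) = A / \<gamma>"
    unfolding \<eta> one_minus_\<beta> A_def using K X \<open>0 < \<gamma>\<close> by (simp add: field_simps power2_eq_square power3_eq_cube)
  moreover have "T * (\<gamma> * (K - 1) / K) = B * \<gamma>" by (simp add: B_def)
  moreover have "2 * A = K^3 * X^2 * D^2 / (K - 1)" using K by (simp add: A_def field_simps)
  moreover have "sqrt (A * B) = K * X * D * sqrt (T / 2)"
  proof -
    have "A * B = (K * X * D)^2 * (T / 2)"
      using K by (simp add: A_def B_def field_simps power2_eq_square power3_eq_cube)
    hence "sqrt (A * B) = sqrt ((K * X * D)^2) * sqrt (T / 2)" by (simp only: real_sqrt_mult)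
    thus ?thesis using K X D by simp
  qed
  ultimately show ?thesis
    using min_one_sqrt_balance[OF \<open>0 < A\<close> \<open>0 < B\<close>] unfolding \<gamma>_AB by simp
qed

theorem theorem5:
  fixes env :: "'k::finite list \<Rightarrow> 'k \<times> (real^'d::finite)"
    and sel :: "('d,'k) wmat \<Rightarrow> real^'d \<Rightarrow> 'k"
    and sel2 :: "('d,'k) wmat \<Rightarrow> real^'d \<Rightarrow> 'k \<Rightarrow> 'k"
    and X D :: real and T :: nat and U :: "('d,'k) wmat"
  assumes "CARD('k) \<ge> 2" and "X > 0" and "D > 0" and "T \<ge> 1"
    and "\<forall>h. norm (snd (env h)) \<le> X"
    and "is_argmax_rule sel" and "is_argmax_other_rule sel2"
    and "norm U \<le> D"
  defines "K \<equiv> real CARD('k)"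
  defines "\<beta> \<equiv> 1 / K"
  defines "\<gamma> \<equiv> min 1 (sqrt (K^3 * X^2 * D^2 / (2 * (1 - \<beta>) * (K - 1) * real T)))"
  defines "\<eta> \<equiv> \<gamma> * (1 - \<beta>) / (K^2 * X^2)"
  shows "measure_pmf.expectation (hist env sel sel2 \<beta> \<gamma> \<eta> D T)
           (\<lambda>h. \<Sum>t<T. if h ! t \<noteq> fst (env (take t h)) then 1 else 0)
         \<le> measure_pmf.expectation (hist env sel sel2 \<beta> \<gamma> \<eta> D T)
             (\<lambda>h. \<Sum>t<T. loss_t env sel sel2 \<beta> \<gamma> \<eta> D h t U)
           + max (K^3 * X^2 * D^2 / (K - 1)) (2 * K * X * D * sqrt (real T / 2))"
proof -
  note K_eq = K_def[THEN meta_eq_to_obj_eq] and \<beta>_eq = \<beta>_def[THEN meta_eq_to_obj_eq]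
    and \<gamma>_eq = \<gamma>_def[THEN meta_eq_to_obj_eq] and \<eta>_eq = \<eta>_def[THEN meta_eq_to_obj_eq]
  have K: "2 \<le> K" using assms(1) by (simp add: K_def)
  have T: "1 \<le> real T" using assms(4) by simp
  note parameters = gaptron_parameters[OF K assms(2,3) T \<beta>_eq \<gamma>_eq \<eta>_eq]
  define H where "H = hist env sel sel2 \<beta> \<gamma> \<eta> D T"
  have "finite (set_pmf H)" unfolding H_def by (rule finite_set_pmf_hist)
  note integrable = integrable_measure_pmf_finite[OF this]
  have surrogate: "measure_pmf.expectation H (\<lambda>h. \<Sum>t<T. surrogate_gap_t env sel sel2 \<beta> \<gamma> \<eta> D h t)
      \<le> real T * (\<gamma> * (K - 1) / K)"
    unfolding H_def using assms(5)
    by (intro expected_sum_surrogate_gap_le[OF assms(6,7) K_eq K \<beta>_eq parameters(1,2)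
          less_imp_le[OF parameters(3)] parameters(4)]) auto
  have "measure_pmf.expectation H (\<lambda>h. \<Sum>t<T. if h ! t \<noteq> fst (env (take t h)) then 1 else 0)
      \<le> measure_pmf.expectation H (\<lambda>h. (\<Sum>t<T. loss_t env sel sel2 \<beta> \<gamma> \<eta> D h t U)
            + (\<Sum>t<T. surrogate_gap_t env sel sel2 \<beta> \<gamma> \<eta> D h t) + D\<^sup>2 / (2 * \<eta>))"
    using mistakes_le_loss_plus_surrogate_gap[OF assms(7) parameters(3) assms(8)]
    by (intro integral_mono integrable)
  also have "\<dots> \<le> measure_pmf.expectation H (\<lambda>h. \<Sum>t<T. loss_t env sel sel2 \<beta> \<gamma> \<eta> D h t U)
      + (real T * (\<gamma> * (K - 1) / K) + D\<^sup>2 / (2 * \<eta>))"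
    using surrogate by (simp add: integrable)
  also have "\<dots> \<le> measure_pmf.expectation H (\<lambda>h. \<Sum>t<T. loss_t env sel sel2 \<beta> \<gamma> \<eta> D h t U)
      + max (K^3 * X^2 * D^2 / (K - 1)) (2 * K * X * D * sqrt (real T / 2))"
    using gaptron_tuning_bound[OF K assms(2,3) T \<beta>_eq \<gamma>_eq \<eta>_eq] by simp
  finally show ?thesis unfolding H_def .
qed

end
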